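(* Let $\mathrm{sol}^\star=(x^\star,y^\star,z^\star,\rho^\star,\lambda^\star,\mu^\star,\nu^\star,\eta^\star)$ be any optimizer of problem (P4) below, and assume that $\rho^{(l),\star}_e(t)\ge\epsilon(\beta)$ for all $e\in\mathcal E$, $t\in\mathcal T$, $l\in\mathcal L$. Then $\nu^{(l),\star}_e(t)\rho^{(l),\star}_e(t)\ge0$ for all $e,t,l$.
   Context: Data: integers $n,T,N\ge1$, $\mathcal E=\{1,\dots,n\}$, $\mathcal T=\{0,\dots,T-1\}$, $\mathcal L=\{1,\dots,N\}$, $\mathcal O=\{1,\dots,m\}$; speed-limit values $0<\gamma^{(1)}<\dots<\gamma^{(m)}$; for each $e$: $h_e>0$, $\bar\rho_e>0$, $\bar f_e>0$, $\bar u_e>0$ with $\bar u_e\bar\rho_e>\bar f_e$, $\tau_e=\bar f_e/(\bar u_e\bar\rho_e-\bar f_e)$; constants $\bar\eta>0$, $\epsilon(\beta)>0$; for each sample $l$ given data $\omega^{(l)}(t)\ge0$, initial densities $\rho^{(l)}_e(0)\ge0$, and $\kappa^{(l)}_e(t)=\frac{1-r^{o,(l)}_{e-1}(t)}{1-r^{in,(l)}_e(t)}$ with $r^{o,(l)},r^{in,(l)}\in[0,1)$. Problem (P4): maximize $-\lambda\epsilon(\beta)-\frac1N\sum_{e,t,l}\bar f_e\bar\rho_e\eta^{(l)}_e(t)+\frac1N\sum_{e,t,l}\nu^{(l)}_e(t)\rho^{(l)}_e(t)$ over $x_{e,i}(t),y^{(l)}_{e,i}(t),z^{(l)}_{e,i}(t),\rho^{(l)}_e(t),\lambda,\mu^{(l)}_e(t),\nu^{(l)}_e(t),\eta^{(l)}_e(t)$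 subject to, for all $e,i,t,l$: (speed limits) $x_{e,i}(t)\in\{0,1\}$, $\sum_{i}x_{e,i}(t)=1$, $\gamma^{(1)}\le\sum_i\gamma^{(i)}x_{e,i}(t)\le\gamma^{(m)}$; (linearization) $0\le z^{(l)}_{e,i}(t)\le\bar\eta x_{e,i}(t)$, $\eta^{(l)}_e(t)-\bar\eta(1-x_{e,i}(t))\le z^{(l)}_{e,i}(t)\le\eta^{(l)}_e(t)$, $0\le y^{(l)}_{e,i}(t)\le\bar\rho_ex_{e,i}(t)$, $\rho^{(l)}_e(t)-\bar\rho_e(1-x_{e,i}(t))\le y^{(l)}_{e,i}(t)\le\rho^{(l)}_e(t)$; (sample trajectories) $\rho^{(l)}_1(t+1)=\rho^{(l)}_1(t)+h_1\omega^{(l)}(t)-h_1\sum_i\gamma^{(i)}y^{(l)}_{1,i}(t)$; for $e\ge2$: $\rho^{(l)}_e(t+1)=\rho^{(l)}_e(t)+h_e\kappa^{(l)}_e(t)\sum_i\gamma^{(i)}y^{(l)}_{e-1,i}(t)-h_e\sum_i\gamma^{(i)}y^{(l)}_{e,i}(t)$ and $\kappa^{(l)}_e(t)\sum_i\gamma^{(i)}y^{(l)}_{e-1,i}(t)\le\min\{\bar f_e,\tau_e\bar u_e(\bar\rho_e-\rho^{(l)}_e(t))\}$; $\rho^{(l)}_e(0)$ equal to the given data; (dual constraints) $\sum_i\gamma^{(i)}(\bar\rho_e-\bar f_e/\bar u_e)z^{(l)}_{e,i}(t)-\mu^{(l)}_e(t)+\bar f_e\eta^{(l)}_e(t)\ge0$;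 $\nu^{(l)}_e(t)=\mu^{(l)}_e(t)+\frac1T\sum_i\gamma^{(i)}x_{e,i}(t)$; $\max_{e,t}|\nu^{(l)}_e(t)|\le\lambda$; $0\le\eta^{(l)}_e(t)\le\bar\eta$. *)

theory Defs
  imports Main "HOL-Library.Extended_Real" Complex_Main
begin

text \<open>Data of problem (P4). Index conventions:
  cells e in {1..n}, times t in {0..<T}, samples l in {1..N}, speed-limit options i in {1..m}.\<close>

record p4_data =
  nE    :: nat
  nT    :: nat
  nN    :: nat
  nm    :: nat
  gam   :: "nat \<Rightarrow> real"
  hh    :: "nat \<Rightarrow> real"
  rhob  :: "nat \<Rightarrow> real"
  fb    :: "nat \<Rightarrow> real"
  ub    :: "nat \<Rightarrow> real"
  etab  :: real
  eps   :: real
  omega :: "nat \<Rightarrow> nat \<Rightarrow> real"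
  rho0  :: "nat \<Rightarrow> nat \<Rightarrow> real"
  rout  :: "nat \<Rightarrow> nat \<Rightarrow> nat \<Rightarrow> real"
  rin   :: "nat \<Rightarrow> nat \<Rightarrow> nat \<Rightarrow> real"

definition tau :: "p4_data \<Rightarrow> nat \<Rightarrow> real" where
  "tau D e = fb D e / (ub D e * rhob D e - fb D e)"

definition kappa :: "p4_data \<Rightarrow> nat \<Rightarrow> nat \<Rightarrow> nat \<Rightarrow> real" where
  "kappa D l e t = (1 - rout D l (e - 1) t) / (1 - rin D l e t)"

definition p4_data_ok :: "p4_data \<Rightarrow> bool" where
  "p4_data_ok D \<longleftrightarrow>
     nE D \<ge> 1 \<and> nT D \<ge> 1 \<and> nN D \<ge> 1 \<and> nm D \<ge> 1 \<and>
     0 < gam D 1 \<and> (\<forall>i\<in>{1..<nm D}. gam D i < gam D (i + 1)) \<and>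
     (\<forall>e\<in>{1..nE D}. hh D e > 0 \<and> rhob D e > 0 \<and> fb D e > 0 \<and> ub D e > 0 \<and>
                     ub D e * rhob D e > fb D e) \<and>
     etab D > 0 \<and> eps D > 0 \<and>
     (\<forall>l\<in>{1..nN D}. \<forall>t\<in>{0..<nT D}. omega D l t \<ge> 0) \<and>
     (\<forall>l\<in>{1..nN D}. \<forall>e\<in>{1..nE D}. rho0 D l e \<ge> 0) \<and>
     (\<forall>l\<in>{1..nN D}. \<forall>e\<in>{1..nE D}. \<forall>t\<in>{0..<nT D}.
        0 \<le> rout D l e t \<and> rout D l e t < 1 \<and> 0 \<le> rin D l e t \<and> rin D l e t < 1)"

text \<open>Decision variables of (P4). Argument order: x e i t; y l e i t; z l e i t;
  rho l e t (t in {0..T}); mu, nu, eta l e t.\<close>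

record p4_sol =
  sx   :: "nat \<Rightarrow> nat \<Rightarrow> nat \<Rightarrow> real"
  sy   :: "nat \<Rightarrow> nat \<Rightarrow> nat \<Rightarrow> nat \<Rightarrow> real"
  sz   :: "nat \<Rightarrow> nat \<Rightarrow> nat \<Rightarrow> nat \<Rightarrow> real"
  srho :: "nat \<Rightarrow> nat \<Rightarrow> nat \<Rightarrow> real"
  slam :: real
  smu  :: "nat \<Rightarrow> nat \<Rightarrow> nat \<Rightarrow> real"
  snu  :: "nat \<Rightarrow> nat \<Rightarrow> nat \<Rightarrow> real"
  seta :: "nat \<Rightarrow> nat \<Rightarrow> nat \<Rightarrow> real"

definition p4_objective :: "p4_data \<Rightarrow> p4_sol \<Rightarrow> real" where
  "p4_objective D s =
     - slam s * eps D
     - (1 / real (nN D)) * (\<Sum>e\<in>{1..nE D}. \<Sum>t\<in>{0..<nT D}. \<Sum>l\<in>{1..nN D}.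
            fb D e * rhob D e * seta s l e t)
     + (1 / real (nN D)) * (\<Sum>e\<in>{1..nE D}. \<Sum>t\<in>{0..<nT D}. \<Sum>l\<in>{1..nN D}.
            snu s l e t * srho s l e t)"

definition p4_feasible :: "p4_data \<Rightarrow> p4_sol \<Rightarrow> bool" where
  "p4_feasible D s \<longleftrightarrow>
    (let n = nE D; T = nT D; N = nN D; m = nm D;
         x = sx s; y = sy s; z = sz s; rho = srho s; lam = slam s;
         mu = smu s; nu = snu s; eta = seta s;
         g = gam D in
    \<comment> \<open>speed limits\<close>
    (\<forall>e\<in>{1..n}. \<forall>t\<in>{0..<T}.
        (\<forall>i\<in>{1..m}. x e i t \<in> {0, 1}) \<and>
        (\<Sum>i\<in>{1..m}. x e i t) = 1 \<and>
        g 1 \<le> (\<Sum>i\<in>{1..m}. g i * x e i t) \<and> (\<Sum>i\<in>{1..m}. g i * x e i t) \<le> g m) \<and>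
    \<comment> \<open>linearization\<close>
    (\<forall>l\<in>{1..N}. \<forall>e\<in>{1..n}. \<forall>i\<in>{1..m}. \<forall>t\<in>{0..<T}.
        0 \<le> z l e i t \<and> z l e i t \<le> etab D * x e i t \<and>
        eta l e t - etab D * (1 - x e i t) \<le> z l e i t \<and> z l e i t \<le> eta l e t \<and>
        0 \<le> y l e i t \<and> y l e i t \<le> rhob D e * x e i t \<and>
        rho l e t - rhob D e * (1 - x e i t) \<le> y l e i t \<and> y l e i t \<le> rho l e t) \<and>
    \<comment> \<open>sample trajectories\<close>
    (\<forall>l\<in>{1..N}. \<forall>t\<in>{0..<T}.
        rho l 1 (t + 1) = rho l 1 t + hh D 1 * omega D l t
                          - hh D 1 * (\<Sum>i\<in>{1..m}. g i * y l 1 i t)) \<and>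
    (\<forall>l\<in>{1..N}. \<forall>e\<in>{2..n}. \<forall>t\<in>{0..<T}.
        rho l e (t + 1) = rho l e t
            + hh D e * kappa D l e t * (\<Sum>i\<in>{1..m}. g i * y l (e - 1) i t)
            - hh D e * (\<Sum>i\<in>{1..m}. g i * y l e i t) \<and>
        kappa D l e t * (\<Sum>i\<in>{1..m}. g i * y l (e - 1) i t)
            \<le> min (fb D e) (tau D e * ub D e * (rhob D e - rho l e t))) \<and>
    (\<forall>l\<in>{1..N}. \<forall>e\<in>{1..n}. rho l e 0 = rho0 D l e) \<and>
    \<comment> \<open>dual constraints\<close>
    (\<forall>l\<in>{1..N}. \<forall>e\<in>{1..n}. \<forall>t\<in>{0..<T}.
        (\<Sum>i\<in>{1..m}. g i * (rhob D e - fb D e / ub D e) * z l e i t)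
            - mu l e t + fb D e * eta l e t \<ge> 0 \<and>
        nu l e t = mu l e t + (1 / real T) * (\<Sum>i\<in>{1..m}. g i * x e i t) \<and>
        0 \<le> eta l e t \<and> eta l e t \<le> etab D) \<and>
    (\<forall>l\<in>{1..N}. (MAX et\<in>{1..n} \<times> {0..<T}. \<bar>nu l (fst et) (snd et)\<bar>) \<le> lam))"

definition p4_optimizer :: "p4_data \<Rightarrow> p4_sol \<Rightarrow> bool" where
  "p4_optimizer D s \<longleftrightarrow>
     p4_feasible D s \<and> (\<forall>s'. p4_feasible D s' \<longrightarrow> p4_objective D s' \<le> p4_objective D s)"

end

theory Submission
  imports Defs
begin

(* If nu * rho < 0 at some (l, e, t), set nu := 0 there and lower mu by the old nu, so that
   nu = mu + (1/T) sum_i gam_i x_i still holds. The new mu is then nonpositive, so the dual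
   inequality at that point holds because its remaining terms are nonnegative, and |nu| only
   shrinks, so lambda still bounds it. The objective grows by -(1/N) nu rho > 0, contradicting
   optimality. *)

lemma increasing_chain_ge_first:
  fixes g :: "nat \<Rightarrow> 'a::order"
  assumes "\<forall>i\<in>{1..<m}. g i < g (i + 1)" and "i \<in> {1..m}"
  shows "g 1 \<le> g i"
proof -
  have "1 \<le> i" "i \<le> m" using assms(2) by auto
  then show ?thesis
  proof (induction i rule: nat_induct_at_least)
    case base
    then show ?case by simp
  next
    case (Suc k)
    then have "g k < g (k + 1)" using assms(1) by simp
    with Suc show ?case by simp
  qed
qed

lemma gam_pos:
  assumes "p4_data_ok D" and "i \<in> {1..nm D}"
  shows "gam D i > 0"
  using assms increasing_chain_ge_first[of "nm D" "gam D" i]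
  by (fastforce simp: p4_data_ok_def)

lemma p4_feasibleD:
  assumes "p4_feasible D s" "e \<in> {1..nE D}" "t \<in> {0..<nT D}" "l \<in> {1..nN D}"
  shows "snu s l e t = smu s l e t + (1 / real (nT D)) * (\<Sum>i\<in>{1..nm D}. gam D i * sx s e i t)"
    and "gam D 1 \<le> (\<Sum>i\<in>{1..nm D}. gam D i * sx s e i t)"
    and "\<forall>i\<in>{1..nm D}. 0 \<le> sz s l e i t"
    and "0 \<le> seta s l e t"
    and "0 \<le> (\<Sum>i\<in>{1..nm D}. gam D i * (rhob D e - fb D e / ub D e) * sz s l e i t)
            - smu s l e t + fb D e * seta s l e t"
  using assms unfolding p4_feasible_def Let_def by simp_all

lemma p4_feasible_MaxD:
  assumes "p4_feasible D s" "l \<in> {1..nN D}"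
  shows "(MAX et\<in>{1..nE D} \<times> {0..<nT D}. \<bar>snu s l (fst et) (snd et)\<bar>) \<le> slam s"
  using assms unfolding p4_feasible_def Let_def by simp

lemma p4_feasible_update_dual:
  assumes "p4_feasible D s"
    and "\<forall>l\<in>{1..nN D}. \<forall>e\<in>{1..nE D}. \<forall>t\<in>{0..<nT D}.
        0 \<le> (\<Sum>i\<in>{1..nm D}. gam D i * (rhob D e - fb D e / ub D e) * sz s l e i t)
            - mu l e t + fb D e * seta s l e t \<and>
        nu l e t = mu l e t + (1 / real (nT D)) * (\<Sum>i\<in>{1..nm D}. gam D i * sx s e i t)"
    and "\<forall>l\<in>{1..nN D}. (MAX et\<in>{1..nE D} \<times> {0..<nT D}. \<bar>nu l (fst et) (snd et)\<bar>) \<le> slam s"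
  shows "p4_feasible D (s\<lparr>smu := mu, snu := nu\<rparr>)"
  using assms unfolding p4_feasible_def Let_def by simp

lemma Max_image_mono:
  fixes f g :: "'a \<Rightarrow> 'b::linorder"
  assumes "finite A" "A \<noteq> {}" "\<And>x. x \<in> A \<Longrightarrow> f x \<le> g x"
  shows "Max (f ` A) \<le> Max (g ` A)"
  using assms by (auto intro: order_trans[OF _ Max_ge])

definition clear_nu :: "p4_sol \<Rightarrow> nat \<Rightarrow> nat \<Rightarrow> nat \<Rightarrow> p4_sol" where
  "clear_nu s e0 t0 l0 = s\<lparr>
     smu := \<lambda>l e t. if e = e0 \<and> t = t0 \<and> l = l0 then smu s l e t - snu s l e t else smu s l e t,
     snu := \<lambda>l e t. if e = e0 \<and> t = t0 \<and> l = l0 then 0 else snu s l e t\<rparr>"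

lemma p4_feasible_clear_nu:
  assumes ok: "p4_data_ok D" and feas: "p4_feasible D s"
    and pt: "e0 \<in> {1..nE D}" "t0 \<in> {0..<nT D}" "l0 \<in> {1..nN D}"
  shows "p4_feasible D (clear_nu s e0 t0 l0)"
  unfolding clear_nu_def
proof (rule p4_feasible_update_dual[OF feas]; intro ballI)
  note at_pt = p4_feasibleD[OF feas pt]
  have "0 \<le> (\<Sum>i\<in>{1..nm D}. gam D i * (rhob D e0 - fb D e0 / ub D e0) * sz s l0 e0 i t0)"
  proof (intro sum_nonneg)
    fix i assume "i \<in> {1..nm D}"
    moreover have "fb D e0 / ub D e0 < rhob D e0"
      using ok pt by (auto simp: p4_data_ok_def pos_divide_less_eq mult.commute)
    ultimately show "0 \<le> gam D i * (rhob D e0 - fb D e0 / ub D e0) * sz s l0 e0 i t0"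
      using gam_pos[OF ok] at_pt(3) by (simp add: less_imp_le)
  qed
  moreover have "0 \<le> fb D e0 * seta s l0 e0 t0"
    using ok pt at_pt(4) by (simp add: p4_data_ok_def less_imp_le)
  moreover have "smu s l0 e0 t0 - snu s l0 e0 t0 \<le> 0"
    using at_pt(1,2) ok by (simp add: p4_data_ok_def)
  ultimately have dual_at_pt:
    "0 \<le> (\<Sum>i\<in>{1..nm D}. gam D i * (rhob D e0 - fb D e0 / ub D e0) * sz s l0 e0 i t0)
          - (smu s l0 e0 t0 - snu s l0 e0 t0) + fb D e0 * seta s l0 e0 t0"
    by linarith
  fix l e t assume "l \<in> {1..nN D}" "e \<in> {1..nE D}" "t \<in> {0..<nT D}"
  with dual_at_pt at_pt(1) p4_feasibleD(1,5)[OF feas]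
  show "0 \<le> (\<Sum>i\<in>{1..nm D}. gam D i * (rhob D e - fb D e / ub D e) * sz s l e i t)
            - (if e = e0 \<and> t = t0 \<and> l = l0 then smu s l e t - snu s l e t else smu s l e t)
            + fb D e * seta s l e t \<and>
        (if e = e0 \<and> t = t0 \<and> l = l0 then 0 else snu s l e t)
          = (if e = e0 \<and> t = t0 \<and> l = l0 then smu s l e t - snu s l e t else smu s l e t)
            + (1 / real (nT D)) * (\<Sum>i\<in>{1..nm D}. gam D i * sx s e i t)"
    by auto
next
  fix l assume l: "l \<in> {1..nN D}"
  have "{1..nE D} \<times> {0..<nT D} \<noteq> {}" using ok by (auto simp: p4_data_ok_def)
  then have "(MAX et\<in>{1..nE D} \<times> {0..<nT D}.
                \<bar>if fst et = e0 \<and> snd et = t0 \<and> l = l0 then 0 else snu s l (fst et) (snd et)\<bar>)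
           \<le> (MAX et\<in>{1..nE D} \<times> {0..<nT D}. \<bar>snu s l (fst et) (snd et)\<bar>)"
    by (intro Max_image_mono) auto
  also have "\<dots> \<le> slam s" by (rule p4_feasible_MaxD[OF feas l])
  finally show "(MAX et\<in>{1..nE D} \<times> {0..<nT D}.
                \<bar>if fst et = e0 \<and> snd et = t0 \<and> l = l0 then 0 else snu s l (fst et) (snd et)\<bar>)
           \<le> slam s" .
qed

lemma sum_if_conj_eq:
  fixes v :: "'a::comm_monoid_add"
  assumes "finite C" "c \<in> C"
  shows "(\<Sum>z\<in>C. if P \<and> z = c then v else 0) = (if P then v else 0)"
  using assms by (cases P) simp_all

lemma sum3_single_point:
  fixes v :: "'a::comm_monoid_add"
  assumes "finite A" "finite B" "finite C" "a \<in> A" "b \<in> B" "c \<in> C"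
  shows "(\<Sum>x\<in>A. \<Sum>y\<in>B. \<Sum>z\<in>C. if x = a \<and> y = b \<and> z = c then v else 0) = v"
proof -
  have "(\<Sum>x\<in>A. \<Sum>y\<in>B. \<Sum>z\<in>C. if x = a \<and> y = b \<and> z = c then v else 0)
      = (\<Sum>x\<in>A. \<Sum>y\<in>B. if x = a \<and> y = b then v else 0)"
    using sum_if_conj_eq[OF assms(3,6), of "_ \<and> _" v] by simp
  also have "\<dots> = (\<Sum>x\<in>A. if x = a then v else 0)"
    using sum_if_conj_eq[OF assms(2,5), of "_ = a" v] by simp
  also have "\<dots> = v"
    using assms(1,4) by simp
  finally show ?thesis .
qed

lemma p4_objective_clear_nu:
  assumes "e0 \<in> {1..nE D}" "t0 \<in> {0..<nT D}" "l0 \<in> {1..nN D}"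
  shows "p4_objective D (clear_nu s e0 t0 l0)
           = p4_objective D s - (1 / real (nN D)) * (snu s l0 e0 t0 * srho s l0 e0 t0)"
proof -
  let ?c = "snu s l0 e0 t0 * srho s l0 e0 t0"
  have "(\<Sum>e\<in>{1..nE D}. \<Sum>t\<in>{0..<nT D}. \<Sum>l\<in>{1..nN D}.
           snu (clear_nu s e0 t0 l0) l e t * srho s l e t)
      = (\<Sum>e\<in>{1..nE D}. \<Sum>t\<in>{0..<nT D}. \<Sum>l\<in>{1..nN D}.
           snu s l e t * srho s l e t - (if e = e0 \<and> t = t0 \<and> l = l0 then ?c else 0))"
    by (intro sum.cong refl) (auto simp: clear_nu_def)
  also have "\<dots> = (\<Sum>e\<in>{1..nE D}. \<Sum>t\<in>{0..<nT D}. \<Sum>l\<in>{1..nN D}. snu s l e t * srho s l e t) - ?c"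
    unfolding sum_subtractf using sum3_single_point[OF _ _ _ assms, of ?c] by simp
  finally show ?thesis
    unfolding p4_objective_def by (simp add: clear_nu_def right_diff_distrib)
qed

theorem proposition1:
  fixes D :: p4_data and s :: p4_sol
  assumes "p4_data_ok D"
    and "p4_optimizer D s"
    and "\<forall>e\<in>{1..nE D}. \<forall>t\<in>{0..<nT D}. \<forall>l\<in>{1..nN D}. srho s l e t \<ge> eps D"
  shows "\<forall>e\<in>{1..nE D}. \<forall>t\<in>{0..<nT D}. \<forall>l\<in>{1..nN D}. snu s l e t * srho s l e t \<ge> 0"
proof (rule ccontr)
  assume "\<not> ?thesis"
  then obtain e0 t0 l0 where pt: "e0 \<in> {1..nE D}" "t0 \<in> {0..<nT D}" "l0 \<in> {1..nN D}"
    and neg: "snu s l0 e0 t0 * srho s l0 e0 t0 < 0"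
    by force
  have feas: "p4_feasible D s"
    and opt: "\<And>s'. p4_feasible D s' \<Longrightarrow> p4_objective D s' \<le> p4_objective D s"
    using assms(2) by (auto simp: p4_optimizer_def)
  have "0 < real (nN D)" using assms(1) by (simp add: p4_data_ok_def)
  with neg have "p4_objective D s < p4_objective D (clear_nu s e0 t0 l0)"
    using p4_objective_clear_nu[OF pt] by (simp add: divide_neg_pos)
  moreover have "p4_feasible D (clear_nu s e0 t0 l0)"
    using p4_feasible_clear_nu[OF assms(1) feas pt] .
  ultimately show False using opt by fastforce
qed

end
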